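(* Let $2\le k\le n-1$, let $v_1,\dots,v_n$ be a basis of $\mathbb{C}^n$, let $i\in\{2,\dots,k\}$, $j\in\{k+1,\dots,n\}$, $h\in\{2,\dots,n\}$, and $a,b\in\mathbb{C}\setminus\{0\}$, and set $$t=a\,v_1\wedge\dots\wedge v_{i-1}\wedge v_j\wedge v_{i+1}\wedge\dots\wedge v_k\otimes v_1+b\,(v_1\wedge\dots\wedge v_k\otimes v_h+v_h\wedge v_2\wedge\dots\wedge v_k\otimes v_1).$$ Then: (i) if $h\in\{2,\dots,k\}$ (so $v_h\in\langle v_2,\dots,v_k\rangle$ and $v_h,v_j$ are not proportional), $t$ has $(2,1^{k-1})$-rank $2$; (ii) if $h\in\{k+1,\dots,n\}$ and $h\neq j$, $t$ has $(2,1^{k-1})$-rank $3$; (iii) if $h=j$, $t$ has $(2,1^{k-1})$-rank $2$.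
   Context: $\mathbb{S}_{(2,1^{k-1})}\mathbb{C}^n\subset\bigwedge^k\mathbb{C}^n\otimes\mathbb{C}^n$ is the Schur module of the partition $(2,1,\dots,1)$ ($k$ parts), the image of the Young symmetrizer (row symmetrization then column antisymmetrization, tableau filled column by column). An element has $(2,1^{k-1})$-rank $1$ if it equals $w_1\wedge\dots\wedge w_k\otimes w_1$ with $w_1,\dots,w_k$ linearly independent; the $(2,1^{k-1})$-rank of $t$ is the least $r$ such that $t$ is a sum of $r$ such elements. *)

theory Defs
  imports "HOL-Analysis.Analysis"
begin

text \<open>Vectors of C^n are elements of complex^'n with n = CARD('n).
  Tensors in (C^n)^{\<otimes>(k+1)} are coefficient functions on multi-indices
  I :: nat \<Rightarrow> 'n, where positions 1..k are the wedge factors and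
  position k+1 is the last tensor factor (other positions are ignored).\<close>

definition wedge :: "nat \<Rightarrow> (nat \<Rightarrow> complex^'n) \<Rightarrow> (nat \<Rightarrow> 'n) \<Rightarrow> complex" where
  "wedge k w = (\<lambda>I. \<Sum>p | p permutes {1..k}. of_int (sign p) * (\<Prod>b\<in>{1..k}. w (p b) $ I b))"

definition tens :: "nat \<Rightarrow> ((nat \<Rightarrow> 'n) \<Rightarrow> complex) \<Rightarrow> complex^'n \<Rightarrow> (nat \<Rightarrow> 'n) \<Rightarrow> complex" where
  "tens k T x = (\<lambda>I. T I * x $ I (Suc k))"

definition indep_fam :: "nat \<Rightarrow> (nat \<Rightarrow> complex^'n) \<Rightarrow> bool" where
  "indep_fam k w \<longleftrightarrow> inj_on w {1..k} \<and> vec.independent (w ` {1..k})"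

definition rk1 :: "nat \<Rightarrow> (nat \<Rightarrow> complex^'n) \<Rightarrow> (nat \<Rightarrow> 'n) \<Rightarrow> complex" where
  "rk1 k w = tens k (wedge k w) (w 1)"

definition hook_rank :: "nat \<Rightarrow> ((nat \<Rightarrow> 'n::finite) \<Rightarrow> complex) \<Rightarrow> nat" where
  "hook_rank k t = (LEAST r. \<exists>ws :: nat \<Rightarrow> nat \<Rightarrow> complex^'n::finite.
      (\<forall>m<r. indep_fam k (ws m)) \<and> t = (\<lambda>I. \<Sum>m<r. rk1 k (ws m) I))"

definition tT :: "nat \<Rightarrow> (nat \<Rightarrow> complex^'n) \<Rightarrow> complex \<Rightarrow> complex \<Rightarrow> nat \<Rightarrow> nat \<Rightarrow> nat
    \<Rightarrow> (nat \<Rightarrow> 'n) \<Rightarrow> complex" where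
  "tT k v a b i j h = (\<lambda>I.
      a * tens k (wedge k (v(i := v j))) (v 1) I
    + b * (tens k (wedge k v) (v h) I + tens k (wedge k (v(1 := v h))) (v 1) I))"

end

theory Submission
  imports Defs
begin

text \<open>Contracting the wedge slots of \<open>w\<^sub>1 \<and> \<dots> \<and> w\<^sub>k \<otimes> x\<close> with covectors
  \<open>\<psi>\<^sub>1, \<dots>, \<psi>\<^sub>k\<close> and the last slot with \<open>\<theta>\<close> gives \<open>det (\<psi>\<^sub>b(w\<^sub>c)) \<cdot> \<theta>(x)\<close>.
  Contracting \<open>t\<close> against the dual basis of \<open>v\<close>, relabelled by \<open>i \<mapsto> j\<close> and/or \<open>1 \<mapsto> h\<close>,
  isolates each of its three terms, so a decomposition of \<open>t\<close> into \<open>r\<close> rank-one elements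
  yields polynomial equations in the determinants \<open>det (\<psi>\<^sub>b(w\<^sup>m\<^sub>c))\<close> and the coordinates
  of the vectors \<open>w\<^sup>m\<^sub>1\<close>. For \<open>r = 1\<close> they are inconsistent. For \<open>r = 2\<close>, \<open>h > k\<close> and
  \<open>h \<noteq> j\<close> they become inconsistent once the exchange relation
  \<open>\<theta>(w\<^sub>1) det (\<psi>\<^sub>b(w\<^sub>c)) = \<Sum>\<^sub>c \<psi>\<^sub>c(w\<^sub>1) det ((\<psi>(c := \<theta>))\<^sub>b(w\<^sub>c))\<close> is added; it
  holds because the last factor of a rank-one element is also one of its wedge factors.
  The matching upper bounds are explicit decompositions, verified by multilinearity of the
  wedge product.\<close>

section \<open>Determinants indexed by a finite set\<close>

definition det_on :: "'i set \<Rightarrow> ('i \<Rightarrow> 'i \<Rightarrow> 'a::comm_ring_1) \<Rightarrow> 'a" where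
  "det_on A M = (\<Sum>p | p permutes A. of_int (sign p) * (\<Prod>b\<in>A. M b (p b)))"

lemma det_on_cong:
  assumes "\<And>b c. b \<in> A \<Longrightarrow> c \<in> A \<Longrightarrow> M b c = M' b c"
  shows "det_on A M = det_on A M'"
  unfolding det_on_def
proof (intro sum.cong refl arg_cong2[where f = "(*)"] prod.cong)
  fix p b assume "p \<in> {p. p permutes A}" "b \<in> A"
  then show "M b (p b) = M' b (p b)" by (simp add: assms permutes_in_image)
qed

lemma det_on_zero_row:
  assumes "finite A" "b \<in> A" "\<And>c. c \<in> A \<Longrightarrow> M b c = 0"
  shows "det_on A M = 0"
  unfolding det_on_def
proof (intro sum.neutral ballI)
  fix p assume "p \<in> {p. p permutes A}"
  then have "M b (p b) = 0" using assms by (simp add: permutes_in_image)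
  then show "of_int (sign p) * (\<Prod>b\<in>A. M b (p b)) = 0"
    using assms(1,2) by (metis mult_zero_right prod_zero)
qed

lemma det_on_diagonal:
  assumes "finite A" "\<And>b c. b \<in> A \<Longrightarrow> c \<in> A \<Longrightarrow> b \<noteq> c \<Longrightarrow> M b c = 0"
  shows "det_on A M = (\<Prod>b\<in>A. M b b)"
proof -
  have "of_int (sign p) * (\<Prod>b\<in>A. M b (p b)) = 0" if "p permutes A" "p \<noteq> id" for p
  proof -
    obtain b where "p b \<noteq> b" using \<open>p \<noteq> id\<close> by (metis eq_id_iff)
    moreover from this have "b \<in> A" using \<open>p permutes A\<close> permutes_not_in by metis
    ultimately have "M b (p b) = 0" using assms(2) \<open>p permutes A\<close> by (simp add: permutes_in_image)
    with \<open>b \<in> A\<close> show ?thesis using assms(1) by (metis mult_zero_right prod_zero)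
  qed
  then have "det_on A M = of_int (sign (id :: 'i \<Rightarrow> 'i)) * (\<Prod>b\<in>A. M b (id b))"
    unfolding det_on_def using assms(1) permutes_id
    by (subst sum.remove[of _ id]) (auto simp: finite_permutations intro!: sum.neutral)
  then show ?thesis by (simp add: sign_id)
qed

lemma det_on_equal_columns:
  fixes M :: "'i \<Rightarrow> 'i \<Rightarrow> 'a::{idom, ring_char_0}"
  assumes "finite A" "c \<in> A" "c' \<in> A" "c \<noteq> c'" "\<And>b. b \<in> A \<Longrightarrow> M b c = M b c'"
  shows "det_on A M = 0"
proof -
  let ?t = "Transposition.transpose c c'"
  have t: "?t permutes A" using assms by (simp add: permutes_swap_id)
  have "det_on A M = (\<Sum>p | p permutes A. of_int (sign (?t \<circ> p)) * (\<Prod>b\<in>A. M b ((?t \<circ> p) b)))"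
    unfolding det_on_def by (rule setum_permutations_compose_left[OF t])
  also have "\<dots> = (\<Sum>p | p permutes A. - (of_int (sign p) * (\<Prod>b\<in>A. M b (p b))))"
  proof (intro sum.cong refl)
    fix p assume "p \<in> {p. p permutes A}"
    then have "sign (?t \<circ> p) = - sign p"
      using assms(1,4)
      by (simp add: sign_compose permutation_swap_id permutes_imp_permutation sign_swap_id)
    moreover have "M b ((?t \<circ> p) b) = M b (p b)" if "b \<in> A" for b
      using assms(5)[OF that] by (auto simp: Transposition.transpose_def)
    ultimately show "of_int (sign (?t \<circ> p)) * (\<Prod>b\<in>A. M b ((?t \<circ> p) b))
        = - (of_int (sign p) * (\<Prod>b\<in>A. M b (p b)))"
      by simp
  qed
  also have "\<dots> = - det_on A M" unfolding det_on_def by (simp add: sum_negf)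
  finally have "2 * det_on A M = 0" by simp
    \<comment> \<open>dividing by 2 is why this proof needs characteristic 0\<close>
  then show ?thesis by simp
qed

lemma det_on_column_linear:
  assumes "finite A" "c \<in> A"
  shows "det_on A (\<lambda>b d. if d = c then \<alpha> * u b + \<beta> * u' b else M b d)
    = \<alpha> * det_on A (\<lambda>b d. if d = c then u b else M b d)
      + \<beta> * det_on A (\<lambda>b d. if d = c then u' b else M b d)"
proof -
  have column: "(\<Prod>b\<in>A. if p b = c then x b else M b (p b))
      = x (inv p c) * (\<Prod>b\<in>A - {inv p c}. M b (p b))" if p: "p permutes A" for p x
  proof -
    have "inv p c \<in> A" "p (inv p c) = c"
      using p assms by (simp_all add: permutes_inv permutes_in_image permutes_inverses)
    moreover have "(\<Prod>b\<in>A - {inv p c}. if p b = c then x b else M b (p b))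
        = (\<Prod>b\<in>A - {inv p c}. M b (p b))"
      using p by (intro prod.cong refl) (metis DiffD2 permutes_inverses(2) singletonI)
    ultimately show ?thesis
      using assms(1) by (simp add: prod.remove)
  qed
  have "of_int (sign p) * (\<Prod>b\<in>A. if p b = c then \<alpha> * u b + \<beta> * u' b else M b (p b))
      = \<alpha> * (of_int (sign p) * (\<Prod>b\<in>A. if p b = c then u b else M b (p b)))
        + \<beta> * (of_int (sign p) * (\<Prod>b\<in>A. if p b = c then u' b else M b (p b)))"
    if "p permutes A" for p
    by (simp only: column[OF that]) (simp add: algebra_simps)
  then show ?thesis
    unfolding det_on_def by (simp add: sum.distrib sum_distrib_left)
qed

lemma sum_over_permutations_insert_right:
  assumes "finite S" "a \<notin> S"
  shows "sum f {p. p permutes insert a S}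
    = (\<Sum>b\<in>insert a S. \<Sum>q | q permutes S. f (q \<circ> Transposition.transpose a b))"
proof -
  have "sum f {p. p permutes insert a S} = (\<Sum>p | p permutes insert a S. f (inv p))"
    by (rule sum_permutations_inverse)
  also have "\<dots> = (\<Sum>b\<in>insert a S. \<Sum>q | q permutes S. f (inv q \<circ> Transposition.transpose a b))"
    using sum_over_permutations_insert[OF assms, of "\<lambda>p. f (inv p)"]
    by (simp add: o_inv_distrib permutes_bij)
  also have "\<dots> = (\<Sum>b\<in>insert a S. \<Sum>q | q permutes S. f (q \<circ> Transposition.transpose a b))"
    by (subst (2) sum_permutations_inverse) (simp add: permutes_inv_inv cong: sum.cong)
  finally show ?thesis .
qed

text \<open>Laplace expansion along the column \<open>a\<close>; the cofactor of \<open>M c a\<close> appears as the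
  determinant in which row \<open>c\<close> is replaced by row \<open>a\<close>.\<close>

lemma det_on_insert_expand:
  assumes "finite A" "a \<notin> A"
  shows "det_on (insert a A) M = M a a * det_on A M - (\<Sum>c\<in>A. M c a * det_on A (M(c := M a)))"
proof -
  let ?t = "Transposition.transpose a"
  let ?term = "\<lambda>P. of_int (sign P) * (\<Prod>b\<in>insert a A. M b (P b))"
  have fix_a: "q a = a" if "q permutes A" for q
    using that assms(2) by (simp add: permutes_not_in)
  have first: "?term q = M a a * (of_int (sign q) * (\<Prod>b\<in>A. M b (q b)))"
    if "q permutes A" for q
    using assms fix_a[OF that] by (simp add: algebra_simps)
  have other: "?term (q \<circ> ?t c) = - (M c a * (of_int (sign q) * (\<Prod>b\<in>A. (M(c := M a)) b (q b))))"
    if q: "q permutes A" and c: "c \<in> A" for q c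
  proof -
    have "sign (q \<circ> ?t c) = - sign q"
      using q c assms
      by (subst sign_compose) (auto simp: permutes_imp_permutation permutation_swap_id sign_swap_id)
    moreover have "(\<Prod>b\<in>A. M b (q (?t c b))) = M c a * (\<Prod>b\<in>A - {c}. M b (q b))"
    proof -
      have "(\<Prod>b\<in>A - {c}. M b (q (?t c b))) = (\<Prod>b\<in>A - {c}. M b (q b))"
        using assms(2) by (intro prod.cong refl) (auto simp: Transposition.transpose_def)
      then show ?thesis
        using prod.remove[OF assms(1) c, of "\<lambda>b. M b (q (?t c b))"] fix_a[OF q] by simp
    qed
    moreover have "(\<Prod>b\<in>A. (M(c := M a)) b (q b)) = M a (q c) * (\<Prod>b\<in>A - {c}. M b (q b))"
      using prod.remove[OF assms(1) c, of "\<lambda>b. (M(c := M a)) b (q b)"] by simp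
    moreover have "(\<Prod>b\<in>insert a A. M b ((q \<circ> ?t c) b)) = M a (q c) * (\<Prod>b\<in>A. M b (q (?t c b)))"
      using assms by simp
    ultimately show ?thesis
      by (simp only:) (simp add: algebra_simps)
  qed
  have "det_on (insert a A) M = (\<Sum>c\<in>insert a A. \<Sum>q | q permutes A. ?term (q \<circ> ?t c))"
    unfolding det_on_def by (rule sum_over_permutations_insert_right[OF assms])
  also have "\<dots> = (\<Sum>q | q permutes A. ?term (q \<circ> ?t a))
      + (\<Sum>c\<in>A. \<Sum>q | q permutes A. ?term (q \<circ> ?t c))"
    using assms by simp
  also have "(\<Sum>q | q permutes A. ?term (q \<circ> ?t a)) = M a a * det_on A M"
    unfolding det_on_def sum_distrib_left by (rule sum.cong) (simp_all add: first)
  also have "(\<Sum>c\<in>A. \<Sum>q | q permutes A. ?term (q \<circ> ?t c))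
      = - (\<Sum>c\<in>A. M c a * det_on A (M(c := M a)))"
    unfolding det_on_def sum_distrib_left sum_negf[symmetric]
    by (intro sum.cong refl other) simp_all
  finally show ?thesis by simp
qed

section \<open>Pairings, dual bases and the exchange relation\<close>

text \<open>Covectors are represented by their coordinate vectors; \<open>pairing\<close> is bilinear, not the
  Hermitian inner product.\<close>

definition pairing :: "'a::comm_ring_1^'n \<Rightarrow> 'a^'n \<Rightarrow> 'a" where
  "pairing \<psi> x = (\<Sum>e\<in>UNIV. \<psi> $ e * x $ e)"

lemma pairing_add_right: "pairing \<psi> (x + y) = pairing \<psi> x + pairing \<psi> y"
  and pairing_diff_right: "pairing \<psi> (x - y) = pairing \<psi> x - pairing \<psi> y"
  and pairing_minus_right: "pairing \<psi> (- x) = - pairing \<psi> x"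
  and pairing_smult_right: "pairing \<psi> (c *s x) = c * pairing \<psi> x"
  and pairing_diff_left: "pairing (\<psi> - \<psi>') x = pairing \<psi> x - pairing \<psi>' x"
  and pairing_smult_left: "pairing (c *s \<psi>) x = c * pairing \<psi> x"
  unfolding pairing_def
  by (simp_all add: algebra_simps sum.distrib sum_subtractf sum_negf sum_distrib_left)

lemma pairing_sum_right: "pairing \<psi> (\<Sum>m\<in>S. x m) = (\<Sum>m\<in>S. pairing \<psi> (x m))"
  unfolding pairing_def by (simp add: sum_distrib_left sum.swap[of _ S])

lemmas pairing_linear =
  pairing_add_right pairing_diff_right pairing_minus_right pairing_smult_right
  pairing_diff_left pairing_smult_left

definition biorthogonal :: "nat \<Rightarrow> (nat \<Rightarrow> 'a::comm_ring_1^'n) \<Rightarrow> (nat \<Rightarrow> 'a^'n) \<Rightarrow> bool" where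
  "biorthogonal n \<phi> v \<longleftrightarrow>
    (\<forall>l\<in>{1..n}. \<forall>m\<in>{1..n}. pairing (\<phi> l) (v m) = (if l = m then 1 else 0))"

lemma biorthogonal_exists:
  fixes v :: "nat \<Rightarrow> 'a::field^'n"
  assumes "inj_on v {1..CARD('n)}" "vec.independent (v ` {1..CARD('n)})"
  shows "\<exists>\<phi>. biorthogonal CARD('n) \<phi> v"
proof -
  let ?B = "v ` {1..CARD('n)}"
  have "card ?B = CARD('n)" using card_image[OF assms(1)] by simp
  then have "UNIV \<subseteq> vec.span ?B"
    by (intro vec.card_ge_dim_independent) (use assms(2) in \<open>auto simp: card_cart_basis\<close>)
  then have span: "x \<in> vec.span ?B" for x by blast
  define \<phi> where "\<phi> l = (\<chi> e. vec.representation ?B (axis e 1) (v l))" for l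
  have pairing_\<phi>: "pairing (\<phi> l) x = vec.representation ?B x (v l)" for l x
  proof -
    have "pairing (\<phi> l) x = (\<Sum>e\<in>UNIV. x $ e * vec.representation ?B (axis e 1) (v l))"
      unfolding pairing_def \<phi>_def by (simp add: mult.commute)
    also have "\<dots> = vec.representation ?B (\<Sum>e\<in>UNIV. x $ e *s axis e 1) (v l)"
      unfolding vec.representation_sum[OF assms(2) span] vec.representation_scale[OF assms(2) span]
      by simp
    finally show ?thesis by (simp add: basis_expansion)
  qed
  have "pairing (\<phi> l) (v m) = (if l = m then 1 else 0)"
    if "l \<in> {1..CARD('n)}" "m \<in> {1..CARD('n)}" for l m
    using that assms(1) vec.representation_basis[OF assms(2), of "v m"]
    by (auto simp: pairing_\<phi> inj_on_eq_iff)
  then show ?thesis unfolding biorthogonal_def by blast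
qed

lemma indep_fam_if_pairings_diagonal:
  fixes w \<psi> :: "nat \<Rightarrow> complex^'n"
  assumes diagonal: "\<And>b c. b \<in> {1..k} \<Longrightarrow> c \<in> {1..k} \<Longrightarrow>
      pairing (\<psi> b) (w c) = (if b = c then d b else 0)"
    and nonzero: "\<And>b. b \<in> {1..k} \<Longrightarrow> d b \<noteq> 0"
  shows "indep_fam k w"
proof -
  have inj: "inj_on w {1..k}"
  proof (rule inj_onI)
    fix c c' assume "c \<in> {1..k}" "c' \<in> {1..k}" "w c = w c'"
    then show "c = c'"
      using diagonal[of c c] diagonal[of c c'] nonzero[of c] by (auto split: if_splits)
  qed
  have "\<not> vec.dependent (w ` {1..k})"
  proof
    assume "vec.dependent (w ` {1..k})"
    then obtain u y where y: "y \<in> w ` {1..k}" "u y \<noteq> 0" and "(\<Sum>x\<in>w ` {1..k}. u x *s x) = 0"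
      using vec.dependent_finite[of "w ` {1..k}"] by auto
    then obtain c where c: "c \<in> {1..k}" "y = w c" by auto
    have "0 = pairing (\<psi> c) (\<Sum>x\<in>w ` {1..k}. u x *s x)"
      using \<open>(\<Sum>x\<in>w ` {1..k}. u x *s x) = 0\<close> by (simp add: pairing_def)
    also have "\<dots> = (\<Sum>c'\<in>{1..k}. u (w c') * pairing (\<psi> c) (w c'))"
      unfolding pairing_sum_right pairing_smult_right by (subst sum.reindex[OF inj]) simp
    also have "\<dots> = (\<Sum>c'\<in>{1..k}. if c' = c then u (w c) * d c else 0)"
      using c by (intro sum.cong) (simp_all add: diagonal)
    also have "\<dots> = u (w c) * d c"
      using c by simp
    finally show False using c y nonzero[OF c(1)] by simp
  qed
  with inj show ?thesis unfolding indep_fam_def by simp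
qed

definition pairing_det :: "nat \<Rightarrow> (nat \<Rightarrow> 'a::comm_ring_1^'n) \<Rightarrow> (nat \<Rightarrow> 'a^'n) \<Rightarrow> 'a" where
  "pairing_det k \<psi> w = det_on {1..k} (\<lambda>b c. pairing (\<psi> b) (w c))"

lemma pairing_det_exchange:
  fixes \<psi> w :: "nat \<Rightarrow> 'a::{idom, ring_char_0}^'n"
  assumes "1 \<le> k"
  shows "pairing \<theta> (w 1) * pairing_det k \<psi> w
    = (\<Sum>c\<in>{1..k}. pairing (\<psi> c) (w 1) * pairing_det k (\<psi>(c := \<theta>)) w)"
proof -
  define M where "M b c = pairing ((\<psi>(0 := \<theta>)) b) ((w(0 := w 1)) c)" for b c
  have "det_on (insert 0 {1..k}) M = 0"
    by (rule det_on_equal_columns[of _ 0 1]) (use assms in \<open>auto simp: M_def\<close>)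
  moreover have "det_on {1..k} M = pairing_det k \<psi> w"
    unfolding pairing_det_def M_def by (rule det_on_cong) simp
  moreover have "det_on {1..k} (M(c := M 0)) = pairing_det k (\<psi>(c := \<theta>)) w" for c
    unfolding pairing_det_def M_def by (rule det_on_cong) simp
  ultimately show ?thesis
    using det_on_insert_expand[of "{1..k}" 0 M] by (simp add: M_def)
qed

lemma pairing_det_exchange_single:
  fixes \<psi> w :: "nat \<Rightarrow> 'a::{idom, ring_char_0}^'n"
  assumes "1 \<le> k" "\<And>c. c \<in> {2..k} \<Longrightarrow> pairing (\<psi> c) (w 1) = 0"
  shows "pairing \<theta> (w 1) * pairing_det k \<psi> w = pairing (\<psi> 1) (w 1) * pairing_det k (\<psi>(1 := \<theta>)) w"
proof -
  have "pairing \<theta> (w 1) * pairing_det k \<psi> w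
      = (\<Sum>c\<in>{1..k}. pairing (\<psi> c) (w 1) * pairing_det k (\<psi>(c := \<theta>)) w)"
    by (rule pairing_det_exchange[OF assms(1)])
  also have "\<dots> = pairing (\<psi> 1) (w 1) * pairing_det k (\<psi>(1 := \<theta>)) w"
    using assms by (subst sum.remove[of _ 1]) (auto intro!: sum.neutral)
  finally show ?thesis .
qed

lemma pairing_det_dual_relabel_eq_1:
  assumes "biorthogonal n \<phi> v" "\<tau> ` {1..k} \<subseteq> {1..n}" "inj_on \<tau> {1..k}"
    and "\<And>b. b \<in> {1..k} \<Longrightarrow> \<psi> b = \<phi> (\<tau> b)" "\<And>c. c \<in> {1..k} \<Longrightarrow> w c = v (\<tau> c)"
  shows "pairing_det k \<psi> w = 1"
proof -
  have "pairing (\<psi> b) (w c) = (if b = c then 1 else 0)" if "b \<in> {1..k}" "c \<in> {1..k}" for b c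
  proof -
    have "\<tau> b \<in> {1..n}" "\<tau> c \<in> {1..n}" using assms(2) that by blast+
    then show ?thesis
      using assms(1,3-5) that unfolding biorthogonal_def by (simp add: inj_on_eq_iff)
  qed
  then have "pairing_det k \<psi> w = (\<Prod>b\<in>{1..k}. 1)"
    unfolding pairing_det_def by (subst det_on_diagonal) auto
  then show ?thesis by simp
qed

lemma pairing_det_dual_relabel_eq_0:
  assumes "biorthogonal n \<phi> v" "\<tau> ` {1..k} \<subseteq> {1..n}" "\<And>c. c \<in> {1..k} \<Longrightarrow> w c = v (\<tau> c)"
    and "b \<in> {1..k}" "\<psi> b = \<phi> l" "l \<in> {1..n}" "l \<notin> \<tau> ` {1..k}"
  shows "pairing_det k \<psi> w = 0"
  unfolding pairing_det_def
proof (rule det_on_zero_row[of _ b])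
  fix c assume c: "c \<in> {1..k}"
  then have "\<tau> c \<in> {1..n}" "\<tau> c \<noteq> l" using assms(2,7) by blast+
  with c assms(1,3,5,6) show "pairing (\<psi> b) (w c) = 0" by (simp add: biorthogonal_def)
qed (use assms in auto)

section \<open>Wedge products, contractions and the hook rank\<close>

lemma wedge_eq_det_on: "wedge k w I = det_on {1..k} (\<lambda>b c. w c $ I b)"
  unfolding wedge_def det_on_def ..

lemma wedge_repeated_factor:
  assumes "c \<in> {1..k}" "c' \<in> {1..k}" "c \<noteq> c'" "w c = w c'"
  shows "wedge k w I = 0"
  unfolding wedge_eq_det_on by (rule det_on_equal_columns[of _ c c']) (use assms in auto)

lemma wedge_linear_factor:
  assumes "c \<in> {1..k}"
  shows "wedge k (w(c := \<alpha> *s x + \<beta> *s y)) I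
    = \<alpha> * wedge k (w(c := x)) I + \<beta> * wedge k (w(c := y)) I"
proof -
  have upd: "wedge k (w(c := z)) I
      = det_on {1..k} (\<lambda>b d. if d = c then z $ I b else w d $ I b)" for z
    unfolding wedge_eq_det_on by (rule det_on_cong) simp
  have "(\<alpha> *s x + \<beta> *s y) $ I b = \<alpha> * x $ I b + \<beta> * y $ I b" for b
    by simp
  then show ?thesis
    unfolding upd by (simp only: det_on_column_linear[OF _ assms] finite_atLeastAtMost)
qed

lemma wedge_add_factor:
  "c \<in> {1..k} \<Longrightarrow> wedge k (w(c := x + y)) I = wedge k (w(c := x)) I + wedge k (w(c := y)) I"
  using wedge_linear_factor[of c k w 1 x 1 y I] by simp

lemma wedge_diff_factor:
  "c \<in> {1..k} \<Longrightarrow> wedge k (w(c := x - y)) I = wedge k (w(c := x)) I - wedge k (w(c := y)) I"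
  using wedge_linear_factor[of c k w 1 x "-1" y I] by simp

lemma wedge_smult_factor:
  "c \<in> {1..k} \<Longrightarrow> wedge k (w(c := \<alpha> *s x)) I = \<alpha> * wedge k (w(c := x)) I"
  using wedge_linear_factor[of c k w \<alpha> x 0 x I] by simp

lemma wedge_minus_factor:
  "c \<in> {1..k} \<Longrightarrow> wedge k (w(c := - x)) I = - wedge k (w(c := x)) I"
  using wedge_linear_factor[of c k w "-1" x 0 x I] by simp

definition contract :: "nat \<Rightarrow> ((nat \<Rightarrow> 'n) \<Rightarrow> 'a::comm_ring_1) \<Rightarrow> (nat \<Rightarrow> 'a^'n) \<Rightarrow> 'a^'n \<Rightarrow> 'a" where
  "contract k T \<psi> \<theta> =
    (\<Sum>I\<in>PiE {1..Suc k} (\<lambda>_. UNIV). T I * (\<Prod>b\<in>{1..k}. \<psi> b $ I b) * \<theta> $ I (Suc k))"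

lemma contract_add: "contract k (\<lambda>I. T I + T' I) \<psi> \<theta> = contract k T \<psi> \<theta> + contract k T' \<psi> \<theta>"
  and contract_mult: "contract k (\<lambda>I. c * T I) \<psi> \<theta> = c * contract k T \<psi> \<theta>"
  and contract_sum: "contract k (\<lambda>I. \<Sum>m\<in>S. F m I) \<psi> \<theta> = (\<Sum>m\<in>S. contract k (F m) \<psi> \<theta>)"
  unfolding contract_def
  by (simp_all add: algebra_simps sum.distrib sum_distrib_left sum_distrib_right sum.swap[of _ S])

lemma contract_tens_wedge:
  "contract k (tens k (wedge k w) x) \<psi> \<theta> = pairing_det k \<psi> w * pairing \<theta> x"
proof -
  define f where "f p b y = (if b = Suc k then x $ y * \<theta> $ y else w (p b) $ y * \<psi> b $ y)" for p b y
  have split: "{1..Suc k} = insert (Suc k) {1..k}" by auto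
  have f_prod: "(\<Prod>b\<in>{1..Suc k}. f p b (I b)) = x $ I (Suc k) * \<theta> $ I (Suc k)
      * ((\<Prod>b\<in>{1..k}. w (p b) $ I b) * (\<Prod>b\<in>{1..k}. \<psi> b $ I b))" for p I
  proof -
    have "(\<Prod>b\<in>{1..k}. f p b (I b)) = (\<Prod>b\<in>{1..k}. w (p b) $ I b * \<psi> b $ I b)"
      by (rule prod.cong) (auto simp: f_def)
    then show ?thesis unfolding split by (simp add: f_def prod.distrib)
  qed
  have summand: "tens k (wedge k w) x I * (\<Prod>b\<in>{1..k}. \<psi> b $ I b) * \<theta> $ I (Suc k)
      = (\<Sum>p | p permutes {1..k}. of_int (sign p) * (\<Prod>b\<in>{1..Suc k}. f p b (I b)))" for I
    unfolding tens_def wedge_def sum_distrib_right f_prod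
    by (intro sum.cong refl) (simp add: mult_ac)
  have "contract k (tens k (wedge k w) x) \<psi> \<theta>
      = (\<Sum>p | p permutes {1..k}. of_int (sign p) *
          (\<Sum>I\<in>PiE {1..Suc k} (\<lambda>_. UNIV). \<Prod>b\<in>{1..Suc k}. f p b (I b)))"
    unfolding contract_def summand sum_distrib_left by (rule sum.swap)
  also have "\<dots>
      = (\<Sum>p | p permutes {1..k}. of_int (sign p) * (\<Prod>b\<in>{1..Suc k}. \<Sum>y\<in>UNIV. f p b y))"
    by (subst prod_sum_PiE) simp_all
  also have "\<dots> = pairing_det k \<psi> w * pairing \<theta> x"
  proof -
    have "(\<Prod>b\<in>{1..k}. \<Sum>y\<in>UNIV. f p b y) = (\<Prod>b\<in>{1..k}. pairing (\<psi> b) (w (p b)))" for p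
      by (rule prod.cong) (auto simp: f_def pairing_def mult.commute)
    moreover have "(\<Sum>y\<in>UNIV. f p (Suc k) y) = pairing \<theta> x" for p
      by (simp add: f_def pairing_def mult.commute)
    ultimately show ?thesis
      unfolding pairing_det_def det_on_def split sum_distrib_right by (simp add: mult_ac)
  qed
  finally show ?thesis .
qed

lemma contract_rk1: "contract k (rk1 k w) \<psi> \<theta> = pairing_det k \<psi> w * pairing \<theta> (w 1)"
  unfolding rk1_def by (rule contract_tens_wedge)

lemma contract_sum_rk1:
  "contract k (\<lambda>I. \<Sum>m<r. rk1 k (ws m) I) \<psi> \<theta>
    = (\<Sum>m<r. pairing_det k \<psi> (ws m) * pairing \<theta> (ws m 1))"
  unfolding contract_sum contract_rk1 ..

definition hook_decomposable :: "nat \<Rightarrow> ((nat \<Rightarrow> 'n::finite) \<Rightarrow> complex) \<Rightarrow> nat \<Rightarrow> bool" where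
  "hook_decomposable k t r \<longleftrightarrow> (\<exists>ws :: nat \<Rightarrow> nat \<Rightarrow> complex^'n.
      (\<forall>m<r. indep_fam k (ws m)) \<and> t = (\<lambda>I. \<Sum>m<r. rk1 k (ws m) I))"

lemma hook_decomposable_sum_list:
  assumes "\<And>w. w \<in> set ws \<Longrightarrow> indep_fam k w"
  shows "hook_decomposable k (\<lambda>I. \<Sum>w\<leftarrow>ws. rk1 k w I) (length ws)"
  unfolding hook_decomposable_def
  by (rule exI[of _ "(!) ws"]) (use assms in \<open>auto simp: sum_list_sum_nth atLeast0LessThan\<close>)

lemma hook_rank_eqI:
  assumes "hook_decomposable k t r"
    and "\<And>r' (ws :: nat \<Rightarrow> nat \<Rightarrow> complex^'n::finite).
      t = (\<lambda>I. \<Sum>m<r'. rk1 k (ws m) I) \<Longrightarrow> r \<le> r'"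
  shows "hook_rank k t = r"
  unfolding hook_rank_def
  by (rule Least_equality) (use assms in \<open>auto simp: hook_decomposable_def\<close>)

section \<open>The tensor \<open>t\<close>\<close>

text \<open>In the application \<open>p\<^sub>m, q\<^sub>m, r\<^sub>m, s\<^sub>m\<close> are the determinants of the wedge factors
  of the \<open>m\<close>-th summand against the dual basis relabelled by nothing, \<open>i \<mapsto> j\<close>, \<open>1 \<mapsto> h\<close> and
  both, \<open>y\<^sub>m, z\<^sub>m\<close> are the coordinates of its last factor along \<open>v 1\<close> and \<open>v h\<close>, and the
  last two hypotheses are exchange relations.\<close>

lemma rank_two_hook_equations_inconsistent:
  fixes a b p0 p1 q0 q1 r0 r1 s0 s1 y0 y1 z0 z1 :: "'a::field_char_0"
  assumes "a \<noteq> 0" "b \<noteq> 0"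
    and p: "p0 * y0 + p1 * y1 = 0" "p0 * z0 + p1 * z1 = b"
    and q: "q0 * y0 + q1 * y1 = a" "q0 * z0 + q1 * z1 = 0"
    and r: "r0 * y0 + r1 * y1 = b" "r0 * z0 + r1 * z1 = 0"
    and s: "s0 * y0 + s1 * y1 = 0" "s0 * z0 + s1 * z1 = 0"
    and hook_p: "z0 * p0 = y0 * r0" and hook_q: "z0 * q0 = y0 * s0"
  shows False
proof -
  define \<Delta> where "\<Delta> = y0 * z1 - y1 * z0"
  have "(p0 * q1 - p1 * q0) * \<Delta> = - (b * a)"
    using p q unfolding \<Delta>_def by algebra
  then have "\<Delta> \<noteq> 0" using assms(1,2) by auto
  have "\<Delta> * p0 = - (b * y1)" "\<Delta> * q0 = a * z1" "\<Delta> * r0 = b * z1" "\<Delta> * s0 = 0"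
    using p q r s unfolding \<Delta>_def by algebra+
  then have "z0 * z1 = 0" "y0 * z1 = - (y1 * z0)"
    using hook_p hook_q \<open>\<Delta> \<noteq> 0\<close> assms(1,2) by algebra+
  then have "\<Delta> = 0" unfolding \<Delta>_def by algebra
  with \<open>\<Delta> \<noteq> 0\<close> show False ..
qed

lemma contract_tT:
  "contract k (tT k v a b i j h) \<psi> \<theta>
    = a * pairing_det k \<psi> (v(i := v j)) * pairing \<theta> (v 1)
      + b * (pairing_det k \<psi> v * pairing \<theta> (v h) + pairing_det k \<psi> (v(1 := v h)) * pairing \<theta> (v 1))"
  unfolding tT_def contract_add contract_mult contract_tens_wedge by (simp add: mult.assoc)

context
  fixes v \<phi> :: "nat \<Rightarrow> complex^'n" and n k i j h :: nat and a b :: complex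
  assumes dual: "biorthogonal n \<phi> v"
    and k: "2 \<le> k" "k < n" and i: "i \<in> {2..k}" and j: "j \<in> {k+1..n}" and h: "h \<in> {2..n}"
    and a: "a \<noteq> 0" and b: "b \<noteq> 0"
begin

lemma pairing_dual: "l \<in> {1..n} \<Longrightarrow> m \<in> {1..n} \<Longrightarrow> pairing (\<phi> l) (v m) = (if l = m then 1 else 0)"
  using dual by (simp add: biorthogonal_def)

lemma contract_tT_dual:
  assumes "l \<in> {1..n}"
  shows "contract k (tT k v a b i j h) \<phi> (\<phi> l) = (if l = h then b else 0)"
proof -
  have "pairing_det k \<phi> v = 1"
    by (rule pairing_det_dual_relabel_eq_1[OF dual, of id]) (use k in auto)
  moreover have "pairing_det k \<phi> (v(i := v j)) = 0"
    by (rule pairing_det_dual_relabel_eq_0[OF dual, of "id(i := j)" _ _ i _ i]) (use i j in auto)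
  moreover have "pairing_det k \<phi> (v(1 := v h)) = 0"
    by (rule pairing_det_dual_relabel_eq_0[OF dual, of "id(1 := h)" _ _ 1 _ 1]) (use k h in auto)
  ultimately show ?thesis
    using assms h by (simp add: contract_tT pairing_dual)
qed

lemma contract_tT_dual_i_to_j:
  assumes "l \<in> {1..n}"
  shows "contract k (tT k v a b i j h) (\<phi>(i := \<phi> j)) (\<phi> l) = (if l = 1 then a else 0)"
proof -
  have "pairing_det k (\<phi>(i := \<phi> j)) v = 0"
    by (rule pairing_det_dual_relabel_eq_0[OF dual, of id _ _ i _ j]) (use i j in auto)
  moreover have "pairing_det k (\<phi>(i := \<phi> j)) (v(i := v j)) = 1"
    by (rule pairing_det_dual_relabel_eq_1[OF dual, of "id(i := j)"])
      (use i j in \<open>auto simp: inj_on_def\<close>)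
  moreover have "pairing_det k (\<phi>(i := \<phi> j)) (v(1 := v h)) = 0"
    by (rule pairing_det_dual_relabel_eq_0[OF dual, of "id(1 := h)" _ _ 1 _ 1]) (use i k h in auto)
  ultimately show ?thesis
    using assms k by (simp add: contract_tT pairing_dual)
qed

lemma tT_sum_rk1_length_ge_2:
  fixes ws :: "nat \<Rightarrow> nat \<Rightarrow> complex^'n"
  assumes t: "tT k v a b i j h = (\<lambda>I. \<Sum>m<r. rk1 k (ws m) I)"
  shows "2 \<le> r"
proof (rule ccontr)
  have eval: "contract k (tT k v a b i j h) \<psi> (\<phi> l)
      = (\<Sum>m<r. pairing_det k \<psi> (ws m) * pairing (\<phi> l) (ws m 1))"
    for \<psi> l unfolding t by (rule contract_sum_rk1)
  have labels: "1 \<in> {1..n}" "h \<in> {1..n}" "h \<noteq> 1" using k h by auto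
  assume "\<not> 2 \<le> r"
  then consider "r = 0" | "r = 1" by linarith
  then show False
  proof cases
    case 1
    then show False using eval[of \<phi> h] contract_tT_dual[of h] labels b by simp
  next
    case 2
    let ?p = "pairing_det k \<phi> (ws 0)" and ?q = "pairing_det k (\<phi>(i := \<phi> j)) (ws 0)"
    let ?y = "pairing (\<phi> 1) (ws 0 1)" and ?z = "pairing (\<phi> h) (ws 0 1)"
    have "?p * ?z = b" "?p * ?y = 0" "?q * ?y = a" "?q * ?z = 0"
      using eval[of \<phi>] eval[of "\<phi>(i := \<phi> j)"] contract_tT_dual contract_tT_dual_i_to_j labels 2
      by simp_all
    then have "b * a = 0" by (metis mult.commute mult.left_commute mult_zero_left)
    with a b show False by simp
  qed
qed

lemma tT_sum_two_rk1_coordinate_zero: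
  fixes ws :: "nat \<Rightarrow> nat \<Rightarrow> complex^'n"
  assumes t: "tT k v a b i j h = (\<lambda>I. \<Sum>m<2. rk1 k (ws m) I)"
    and l: "l \<in> {1..n}" "l \<noteq> 1" "l \<noteq> h"
  shows "pairing (\<phi> l) (ws 0 1) = 0"
proof -
  have eval: "contract k (tT k v a b i j h) \<psi> (\<phi> l')
      = pairing_det k \<psi> (ws 0) * pairing (\<phi> l') (ws 0 1)
        + pairing_det k \<psi> (ws 1) * pairing (\<phi> l') (ws 1 1)"
    for \<psi> l' unfolding t contract_sum_rk1 by (simp add: numeral_2_eq_2)
  let ?p = "\<lambda>m. pairing_det k \<phi> (ws m)" and ?q = "\<lambda>m. pairing_det k (\<phi>(i := \<phi> j)) (ws m)"
  let ?x = "\<lambda>l' m. pairing (\<phi> l') (ws m 1)"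
  have "1 \<in> {1..n}" "h \<in> {1..n}" "h \<noteq> 1" using k h by auto
  then have "?p 0 * ?x 1 0 + ?p 1 * ?x 1 1 = 0" "?p 0 * ?x h 0 + ?p 1 * ?x h 1 = b"
    "?q 0 * ?x 1 0 + ?q 1 * ?x 1 1 = a" "?q 0 * ?x h 0 + ?q 1 * ?x h 1 = 0"
    using contract_tT_dual[of 1] contract_tT_dual[of h] contract_tT_dual_i_to_j[of 1]
      contract_tT_dual_i_to_j[of h]
    unfolding eval by simp_all
  then have "(?p 0 * ?q 1 - ?p 1 * ?q 0) * (?x 1 0 * ?x h 1 - ?x 1 1 * ?x h 0) = - (b * a)"
    by algebra
  then have "?p 0 * ?q 1 - ?p 1 * ?q 0 \<noteq> 0" using a b by auto
  moreover have "?p 0 * ?x l 0 + ?p 1 * ?x l 1 = 0" "?q 0 * ?x l 0 + ?q 1 * ?x l 1 = 0"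
    using contract_tT_dual[OF l(1)] contract_tT_dual_i_to_j[OF l(1)] l unfolding eval by simp_all
  then have "(?p 0 * ?q 1 - ?p 1 * ?q 0) * ?x l 0 = 0" by algebra
  ultimately show ?thesis by simp
qed

lemma hook_decomposable_tT_h_le_k:
  assumes "h \<le> k"
  shows "hook_decomposable k (tT k v a b i j h) 2"
proof -
  define w0 where "w0 = v(i := a *s v j - v i)"
  define w1 where "w1 = v(1 := v 1 + b *s v h)"
  have slots: "1 \<in> {1..k}" "i \<in> {1..k}" "i \<noteq> 1" using i by auto
  have "wedge k (v(1 := v h)) I = 0" for I
    by (rule wedge_repeated_factor[of 1 k h]) (use assms h in auto)
  then have "tT k v a b i j h = (\<lambda>I. \<Sum>w\<leftarrow>[w0, w1]. rk1 k w I)"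
    using slots by (simp add: fun_eq_iff tT_def rk1_def tens_def w0_def w1_def wedge_add_factor
        wedge_diff_factor wedge_smult_factor algebra_simps)
  moreover have "indep_fam k w0"
    by (rule indep_fam_if_pairings_diagonal[where \<psi> = \<phi> and d = "\<lambda>u. if u = i then -1 else 1"])
      (use i j k in \<open>auto simp: w0_def pairing_linear pairing_dual\<close>)
  moreover have "indep_fam k w1"
    by (rule indep_fam_if_pairings_diagonal[where \<psi> = "\<phi>(h := \<phi> h - b *s \<phi> 1)" and d = "\<lambda>_. 1"])
      (use assms h k in \<open>auto simp: w1_def pairing_linear pairing_dual\<close>)
  ultimately show ?thesis
    using hook_decomposable_sum_list[of "[w0, w1]" k] by (auto simp: numeral_2_eq_2)
qed

lemma hook_decomposable_tT_h_eq_j: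
  assumes "h = j"
  shows "hook_decomposable k (tT k v a b i j h) 2"
proof -
  \<comment> \<open>with \<open>W, A, B\<close> the wedges of \<open>v\<close>, \<open>v(i := v j)\<close>, \<open>v(1 := v j)\<close>, the summands are
    \<open>(W + B b/2 + A a/2) \<otimes> (v 1 + v j b/2)\<close> and \<open>(A a/2 - W + B b/2) \<otimes> (v 1 - v j b/2)\<close>\<close>
  define w0 where "w0 = v(i := v i + (a / 2) *s v j, 1 := v 1 + (b / 2) *s v j)"
  define w1 where "w1 = v(i := (a / 2) *s v j - v i, 1 := v 1 - (b / 2) *s v j)"
  have slots: "1 \<in> {1..k}" "i \<in> {1..k}" "i \<noteq> 1" using i by auto
  have "wedge k (v(i := v j, 1 := v j)) I = 0" for I
    by (rule wedge_repeated_factor[of 1 k i]) (use slots in auto)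
  then have "tT k v a b i j h = (\<lambda>I. \<Sum>w\<leftarrow>[w0, w1]. rk1 k w I)"
    using slots assms
    by (simp add: fun_eq_iff tT_def rk1_def tens_def w0_def w1_def wedge_add_factor
        wedge_diff_factor wedge_smult_factor fun_upd_twist algebra_simps)
  moreover have "indep_fam k w0"
    by (rule indep_fam_if_pairings_diagonal[where \<psi> = \<phi> and d = "\<lambda>_. 1"])
      (use i j k in \<open>auto simp: w0_def pairing_linear pairing_dual\<close>)
  moreover have "indep_fam k w1"
    by (rule indep_fam_if_pairings_diagonal[where \<psi> = \<phi> and d = "\<lambda>u. if u = i then -1 else 1"])
      (use i j k in \<open>auto simp: w1_def pairing_linear pairing_dual\<close>)
  ultimately show ?thesis
    using hook_decomposable_sum_list[of "[w0, w1]" k] by (auto simp: numeral_2_eq_2)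
qed

context
  assumes h_large: "k < h" "h \<noteq> j"
begin

lemma contract_tT_dual_1_to_h:
  assumes "l \<in> {1..n}"
  shows "contract k (tT k v a b i j h) (\<phi>(1 := \<phi> h)) (\<phi> l) = (if l = 1 then b else 0)"
proof -
  have "pairing_det k (\<phi>(1 := \<phi> h)) v = 0"
    by (rule pairing_det_dual_relabel_eq_0[OF dual, of id _ _ 1 _ h]) (use k h h_large in auto)
  moreover have "pairing_det k (\<phi>(1 := \<phi> h)) (v(i := v j)) = 0"
    by (rule pairing_det_dual_relabel_eq_0[OF dual, of "id(i := j)" _ _ 1 _ h])
      (use k i j h h_large in auto)
  moreover have "pairing_det k (\<phi>(1 := \<phi> h)) (v(1 := v h)) = 1"
    by (rule pairing_det_dual_relabel_eq_1[OF dual, of "id(1 := h)"])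
      (use k h h_large in \<open>auto simp: inj_on_def\<close>)
  ultimately show ?thesis
    using assms k by (simp add: contract_tT pairing_dual)
qed

lemma contract_tT_dual_both: "contract k (tT k v a b i j h) (\<phi>(1 := \<phi> h, i := \<phi> j)) \<theta> = 0"
proof -
  have "pairing_det k (\<phi>(1 := \<phi> h, i := \<phi> j)) v = 0"
    by (rule pairing_det_dual_relabel_eq_0[OF dual, of id _ _ 1 _ h]) (use k i h h_large in auto)
  moreover have "pairing_det k (\<phi>(1 := \<phi> h, i := \<phi> j)) (v(i := v j)) = 0"
    by (rule pairing_det_dual_relabel_eq_0[OF dual, of "id(i := j)" _ _ 1 _ h])
      (use k i j h h_large in auto)
  moreover have "pairing_det k (\<phi>(1 := \<phi> h, i := \<phi> j)) (v(1 := v h)) = 0"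
    by (rule pairing_det_dual_relabel_eq_0[OF dual, of "id(1 := h)" _ _ i _ j])
      (use k i j h h_large in auto)
  ultimately show ?thesis by (simp add: contract_tT)
qed

lemma hook_decomposable_tT_h_large:
  "hook_decomposable k (tT k v a b i j h) 3"
proof -
  define w0 where "w0 = v(i := a *s v j)"
  define w1 where "w1 = v(1 := v 1 + (b / 2) *s v h)"
  define w2 where "w2 = v(1 := v 1 - (b / 2) *s v h, i := - v i)"
  have slots: "1 \<in> {1..k}" "i \<in> {1..k}" "i \<noteq> 1" using i by auto
  have restore: "v(c' := x, c := v c) = v(c' := x)" if "c \<noteq> c'" for c c' x
    using that by auto
  have "tT k v a b i j h = (\<lambda>I. \<Sum>w\<leftarrow>[w0, w1, w2]. rk1 k w I)"
    using slots
    by (simp add: fun_eq_iff tT_def rk1_def tens_def w0_def w1_def w2_def wedge_add_factor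
        wedge_diff_factor wedge_smult_factor wedge_minus_factor restore algebra_simps)
  moreover have "indep_fam k w0"
    by (rule indep_fam_if_pairings_diagonal
        [where \<psi> = "\<phi>(i := \<phi> j)" and d = "\<lambda>u. if u = i then a else 1"])
      (use a i j k in \<open>auto simp: w0_def pairing_linear pairing_dual\<close>)
  moreover have "indep_fam k w1"
    by (rule indep_fam_if_pairings_diagonal[where \<psi> = \<phi> and d = "\<lambda>_. 1"])
      (use h k h_large in \<open>auto simp: w1_def pairing_linear pairing_dual\<close>)
  moreover have "indep_fam k w2"
    by (rule indep_fam_if_pairings_diagonal[where \<psi> = \<phi> and d = "\<lambda>u. if u = i then -1 else 1"])
      (use i h k h_large in \<open>auto simp: w2_def pairing_linear pairing_dual\<close>)
  ultimately show ?thesis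
    using hook_decomposable_sum_list[of "[w0, w1, w2]" k] by (auto simp: numeral_3_eq_3)
qed

lemma tT_sum_two_rk1_exchange:
  fixes ws :: "nat \<Rightarrow> nat \<Rightarrow> complex^'n"
  assumes t: "tT k v a b i j h = (\<lambda>I. \<Sum>m<2. rk1 k (ws m) I)"
  shows "pairing (\<phi> h) (ws 0 1) * pairing_det k \<phi> (ws 0)
      = pairing (\<phi> 1) (ws 0 1) * pairing_det k (\<phi>(1 := \<phi> h)) (ws 0)"
    and "pairing (\<phi> h) (ws 0 1) * pairing_det k (\<phi>(i := \<phi> j)) (ws 0)
      = pairing (\<phi> 1) (ws 0 1) * pairing_det k (\<phi>(1 := \<phi> h, i := \<phi> j)) (ws 0)"
proof -
  have coordinate_zero: "pairing (\<phi> l) (ws 0 1) = 0" if "l \<in> {1..n} - {1, h}" for l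
    using tT_sum_two_rk1_coordinate_zero[OF t] that by blast
  have "pairing (\<phi> c) (ws 0 1) = 0" if "c \<in> {2..k}" for c
    using that k h_large by (intro coordinate_zero) auto
  then show "pairing (\<phi> h) (ws 0 1) * pairing_det k \<phi> (ws 0)
      = pairing (\<phi> 1) (ws 0 1) * pairing_det k (\<phi>(1 := \<phi> h)) (ws 0)"
    using k by (intro pairing_det_exchange_single) auto
  have "pairing ((\<phi>(i := \<phi> j)) c) (ws 0 1) = 0" if "c \<in> {2..k}" for c
  proof -
    have "(if c = i then j else c) \<in> {1..n} - {1, h}" using that i j k h_large by auto
    then show ?thesis using coordinate_zero by (cases "c = i") auto
  qed
  moreover have "\<phi>(1 := \<phi> h, i := \<phi> j) = (\<phi>(i := \<phi> j))(1 := \<phi> h)"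
    using i by (auto simp: fun_upd_twist)
  ultimately show "pairing (\<phi> h) (ws 0 1) * pairing_det k (\<phi>(i := \<phi> j)) (ws 0)
      = pairing (\<phi> 1) (ws 0 1) * pairing_det k (\<phi>(1 := \<phi> h, i := \<phi> j)) (ws 0)"
    using pairing_det_exchange_single[of k "\<phi>(i := \<phi> j)" "ws 0" "\<phi> h"] k i by simp
qed

lemma tT_sum_rk1_length_ge_3:
  fixes ws :: "nat \<Rightarrow> nat \<Rightarrow> complex^'n"
  assumes t: "tT k v a b i j h = (\<lambda>I. \<Sum>m<r. rk1 k (ws m) I)"
  shows "3 \<le> r"
proof (rule ccontr)
  assume "\<not> 3 \<le> r"
  with tT_sum_rk1_length_ge_2[OF t] have "r = 2" by linarith
  with t have t2: "tT k v a b i j h = (\<lambda>I. \<Sum>m<2. rk1 k (ws m) I)" by simp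
  have eval: "contract k (tT k v a b i j h) \<psi> (\<phi> l)
      = pairing_det k \<psi> (ws 0) * pairing (\<phi> l) (ws 0 1)
        + pairing_det k \<psi> (ws 1) * pairing (\<phi> l) (ws 1 1)"
    for \<psi> l unfolding t2 contract_sum_rk1 by (simp add: numeral_2_eq_2)
  define det_id where "det_id m = pairing_det k \<phi> (ws m)" for m
  define det_ij where "det_ij m = pairing_det k (\<phi>(i := \<phi> j)) (ws m)" for m
  define det_1h where "det_1h m = pairing_det k (\<phi>(1 := \<phi> h)) (ws m)" for m
  define det_both where "det_both m = pairing_det k (\<phi>(1 := \<phi> h, i := \<phi> j)) (ws m)" for m
  define y where "y m = pairing (\<phi> 1) (ws m 1)" for m
  define z where "z m = pairing (\<phi> h) (ws m 1)" for m
  have "1 \<in> {1..n}" "h \<in> {1..n}" "h \<noteq> 1" using k h by auto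
  then have eqs:
    "det_id 0 * y 0 + det_id 1 * y 1 = 0" "det_id 0 * z 0 + det_id 1 * z 1 = b"
    "det_ij 0 * y 0 + det_ij 1 * y 1 = a" "det_ij 0 * z 0 + det_ij 1 * z 1 = 0"
    "det_1h 0 * y 0 + det_1h 1 * y 1 = b" "det_1h 0 * z 0 + det_1h 1 * z 1 = 0"
    "det_both 0 * y 0 + det_both 1 * y 1 = 0" "det_both 0 * z 0 + det_both 1 * z 1 = 0"
    unfolding det_id_def det_ij_def det_1h_def det_both_def y_def z_def eval[symmetric]
    using contract_tT_dual[of 1] contract_tT_dual[of h] contract_tT_dual_i_to_j[of 1]
      contract_tT_dual_i_to_j[of h] contract_tT_dual_1_to_h[of 1] contract_tT_dual_1_to_h[of h]
      contract_tT_dual_both[of "\<phi> 1"] contract_tT_dual_both[of "\<phi> h"]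
    by simp_all
  show False
    using rank_two_hook_equations_inconsistent[OF a b eqs] tT_sum_two_rk1_exchange[OF t2]
    unfolding det_id_def det_ij_def det_1h_def det_both_def y_def z_def by blast
qed

end

end

theorem mainTheorem13:
  fixes v :: "nat \<Rightarrow> complex^'n" and k i j h :: nat and a b :: complex
  assumes "2 \<le> k" and "k \<le> CARD('n) - 1"
    and "inj_on v {1..CARD('n)}" and "vec.independent (v ` {1..CARD('n)})"
    and "i \<in> {2..k}" and "j \<in> {k+1..CARD('n)}" and "h \<in> {2..CARD('n)}"
    and "a \<noteq> 0" and "b \<noteq> 0"
  shows "(h \<in> {2..k} \<longrightarrow> hook_rank k (tT k v a b i j h) = 2)
       \<and> (h \<in> {k+1..CARD('n)} \<and> h \<noteq> j \<longrightarrow> hook_rank k (tT k v a b i j h) = 3)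
       \<and> (h = j \<longrightarrow> hook_rank k (tT k v a b i j h) = 2)"
proof -
  obtain \<phi> where dual: "biorthogonal CARD('n) \<phi> v"
    using biorthogonal_exists[OF assms(3,4)] by blast
  have "k < CARD('n)" using assms(1,2) by linarith
  note setting = dual assms(1) this assms(5-9)
  have rank_2: "hook_rank k (tT k v a b i j h) = 2" if "hook_decomposable k (tT k v a b i j h) 2"
    using hook_rank_eqI[OF that tT_sum_rk1_length_ge_2[OF setting]] .
  show ?thesis
  proof (intro conjI impI)
    assume "h \<in> {2..k}"
    then show "hook_rank k (tT k v a b i j h) = 2"
      by (intro rank_2 hook_decomposable_tT_h_le_k[OF setting]) simp
  next
    assume "h \<in> {k+1..CARD('n)} \<and> h \<noteq> j"
    then have "k < h" "h \<noteq> j" by auto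
    note large = setting this
    show "hook_rank k (tT k v a b i j h) = 3"
      by (rule hook_rank_eqI[OF hook_decomposable_tT_h_large[OF large]
            tT_sum_rk1_length_ge_3[OF large]])
  next
    assume "h = j"
    then show "hook_rank k (tT k v a b i j h) = 2"
      by (intro rank_2 hook_decomposable_tT_h_eq_j[OF setting])
  qed
qed

end
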